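(* Let $M, K, P, N$ be positive integers with $M \le K \le P$ and such that $P$ divides $N$. Let $\mathbf{A} = [\mathbf{a}_1, \ldots, \mathbf{a}_M]^T \in \mathbb{R}^{M \times N}$ be any matrix, and let $\mathbf{B} \in \mathbb{R}^{P \times K}$ be a matrix such that every square sub-matrix of $\mathbf{B}$ is invertible. For vectors $\mathbf{z}_1, \ldots, \mathbf{z}_{K-M} \in \mathbb{R}^N$, let $\tilde{\mathbf{A}} = [\mathbf{a}_1, \ldots, \mathbf{a}_M, \mathbf{z}_1, \ldots, \mathbf{z}_{K-M}]^T \in \mathbb{R}^{K \times N}$ be the matrix obtained by appending the rows $\mathbf{z}_1^T, \ldots, \mathbf{z}_{K-M}^T$ to $\mathbf{A}$. Then there exists a choice of $\mathbf{z}_1, \ldots, \mathbf{z}_{K-M}$ such that every row of $\mathbf{F} = \mathbf{B}\tilde{\mathbf{A}}$ has sparsity at most $s = \frac{N}{P}(P-K+M)$.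
   Context: The sparsity of a vector is its number of nonzero entries. A square sub-matrix of $\mathbf{B}$ is a matrix obtained by selecting some set of $r$ rows and some set of $r$ columns of $\mathbf{B}$ (for any $r \ge 1$). *)

theory Defs
  imports "Jordan_Normal_Form.Matrix" "Jordan_Normal_Form.DL_Submatrix"
begin

definition sparsity :: "'a :: zero vec \<Rightarrow> nat" where
  "sparsity v = card {i. i < dim_vec v \<and> v $ i \<noteq> 0}"

definition all_square_submatrices_invertible :: "'a :: comm_ring_1 mat \<Rightarrow> bool" where
  "all_square_submatrices_invertible B \<longleftrightarrow>
     (\<forall>R C. R \<subseteq> {..<dim_row B} \<longrightarrow> C \<subseteq> {..<dim_col B} \<longrightarrow>
        card R = card C \<longrightarrow> card R \<ge> 1 \<longrightarrow> invertible_mat (submatrix B R C))"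

end

theory Submission
  imports Defs
begin

text \<open>
  Split B into its first M columns B1 and its last K - M columns B2, so that column j of
  B * (A @r Z) equals B1 a_j + B2 z_j. Every (K - M)-row square submatrix of B2 is invertible,
  hence z_j can be chosen to make column j vanish on any prescribed set of K - M rows. Prescribing
  for column j the cyclic window of rows i with (i + j) mod P < K - M, every row lies in the
  window of exactly (N/P)(K - M) of the N columns, so it has at most (N/P)(P - K + M)
  nonzero entries.
\<close>

lemma pick_atLeastLessThan:
  assumes "c < n - m"
  shows "pick {m..<n} c = m + c"
proof -
  have "{a \<in> {m..<n}. a < m + c} = {m..<m + c}" using assms by auto
  then have "card {a \<in> {m..<n}. a < m + c} = c" by simp
  moreover have "m + c \<in> {m..<n}" using assms by auto
  ultimately show ?thesis using pick_card_in_set[of "m + c" "{m..<n}"] by simp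
qed

lemma submatrix_cols_atLeastLessThan:
  fixes B :: "'a mat"
  assumes "n \<le> dim_col B"
  shows "submatrix B UNIV {m..<n} \<in> carrier_mat (dim_row B) (n - m)"
    and "i < dim_row B \<Longrightarrow> c < n - m \<Longrightarrow> submatrix B UNIV {m..<n} $$ (i, c) = B $$ (i, m + c)"
proof -
  have "{j. j < dim_col B \<and> j \<in> {m..<n}} = {m..<n}" using assms by auto
  then have cols: "card {j. j < dim_col B \<and> j \<in> {m..<n}} = n - m" by simp
  have rows: "card {i. i < dim_row B \<and> i \<in> UNIV} = dim_row B" by simp
  show "submatrix B UNIV {m..<n} \<in> carrier_mat (dim_row B) (n - m)"
    by (rule carrier_matI) (simp_all only: dim_submatrix cols rows)
  show "submatrix B UNIV {m..<n} $$ (i, c) = B $$ (i, m + c)" if "i < dim_row B" "c < n - m"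
    using submatrix_index[of i B UNIV c "{m..<n}"] that
    by (simp only: cols rows pick_UNIV pick_atLeastLessThan)
qed

lemma invertible_mat_carrier_0:
  assumes "A \<in> carrier_mat 0 0"
  shows "invertible_mat A"
proof -
  have "A * A = 1\<^sub>m (dim_row A)"
    by (rule eq_matI) (use assms in simp_all)
  then show ?thesis unfolding invertible_mat_def inverts_mat_def using assms by auto
qed

text \<open>The definition only covers r \<ge> 1; the empty case is needed when no rows are appended.\<close>

lemma all_square_submatrices_invertibleD:
  assumes "all_square_submatrices_invertible B"
    and "R \<subseteq> {..<dim_row B}" "C \<subseteq> {..<dim_col B}" "card R = card C"
  shows "invertible_mat (submatrix B R C)"
proof (cases "card R = 0")
  case True
  moreover have "finite R" "finite C"
    using assms(2,3) finite_subset[OF _ finite_lessThan] by blast+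
  ultimately have "R = {}" "C = {}" using assms(4) by simp_all
  then have "submatrix B R C \<in> carrier_mat 0 0" by (intro carrier_matI) (simp_all add: dim_submatrix)
  then show ?thesis by (rule invertible_mat_carrier_0)
next
  case False
  with assms show ?thesis unfolding all_square_submatrices_invertible_def by auto
qed

lemma invertible_mat_mult_vec_surj:
  fixes A :: "'a :: semiring_1 mat"
  assumes "invertible_mat A" "A \<in> carrier_mat n n" "y \<in> carrier_vec n"
  shows "\<exists>x \<in> carrier_vec n. A *\<^sub>v x = y"
proof -
  obtain A' where AA': "A * A' = 1\<^sub>m n" and A'A: "A' * A = 1\<^sub>m (dim_row A')"
    using assms(1,2) unfolding invertible_mat_def inverts_mat_def by auto
  have "dim_col (A' * A) = dim_col (1\<^sub>m (dim_row A') :: 'a mat)" using A'A by simp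
  moreover have "dim_col (A * A') = dim_col (1\<^sub>m n :: 'a mat)" using AA' by simp
  ultimately have A': "A' \<in> carrier_mat n n" using assms(2) by auto
  have "A *\<^sub>v (A' *\<^sub>v y) = (A * A') *\<^sub>v y" using A' assms(2,3) by simp
  also have "\<dots> = y" using AA' assms(3) by simp
  finally show ?thesis using A' assms(3) by (intro bexI[of _ "A' *\<^sub>v y"]) auto
qed

lemma row_submatrix_UNIV:
  assumes "i \<in> S" "i < dim_row C"
  shows "row (submatrix C S UNIV) (card {a \<in> S. a < i}) = row C i"
proof -
  have "{a \<in> S. a < i} \<subset> {a. a < dim_row C \<and> a \<in> S}" using assms by auto
  then have "card {a \<in> S. a < i} < dim_row (submatrix C S UNIV)"
    by (simp add: dim_submatrix psubset_card_mono)
  then show ?thesis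
    by (intro eq_vecI) (use assms submatrix_index_card[of i C _ S UNIV] in \<open>auto simp: dim_submatrix\<close>)
qed

lemma exists_mult_mat_vec_eq_on_rows:
  fixes C :: "'a :: semiring_1 mat"
  assumes C: "C \<in> carrier_mat n l" and S: "S \<subseteq> {..<n}"
    and inv: "invertible_mat (submatrix C S UNIV)" and y: "y \<in> carrier_vec n"
  shows "\<exists>z \<in> carrier_vec l. \<forall>i\<in>S. (C *\<^sub>v z) $ i = y $ i"
proof -
  let ?Cs = "submatrix C S UNIV"
  have "{i. i < dim_row C \<and> i \<in> S} = S" using C S by auto
  then have "?Cs \<in> carrier_mat (card S) l" using C by (intro carrier_matI) (auto simp: dim_submatrix)
  moreover have "square_mat ?Cs" using inv unfolding invertible_mat_def by simp
  ultimately have Cs: "?Cs \<in> carrier_mat l l" and cardS: "card S = l" by auto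
  obtain z where z: "z \<in> carrier_vec l" and "?Cs *\<^sub>v z = vec l (\<lambda>r. y $ pick S r)"
    using invertible_mat_mult_vec_surj[OF inv Cs, of "vec l (\<lambda>r. y $ pick S r)"] by auto
  have "(C *\<^sub>v z) $ i = y $ i" if "i \<in> S" for i
  proof -
    let ?r = "card {a \<in> S. a < i}"
    have "finite S" using S finite_subset by blast
    then have "?r < l" using that cardS by (intro psubset_card_mono[THEN less_le_trans]) auto
    have "i < dim_row C" using that S C by auto
    then have "(C *\<^sub>v z) $ i = row ?Cs ?r \<bullet> z" by (simp add: row_submatrix_UNIV[OF that])
    also have "\<dots> = (?Cs *\<^sub>v z) $ ?r" using Cs \<open>?r < l\<close> by simp
    also have "\<dots> = y $ i"
      using \<open>?Cs *\<^sub>v z = _\<close> \<open>?r < l\<close> pick_card_in_set[OF that] by simp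
    finally show ?thesis .
  qed
  with z show ?thesis by blast
qed

lemma index_mult_mat_sum:
  assumes "i < dim_row X" "j < dim_col Y" "dim_col X = dim_row Y"
  shows "(X * Y) $$ (i, j) = (\<Sum>c<dim_row Y. X $$ (i, c) * Y $$ (c, j))"
  using assms by (auto simp: scalar_prod_def atLeast0LessThan intro: sum.cong)

lemma sum_lessThan_add_split:
  fixes f :: "nat \<Rightarrow> 'a :: comm_monoid_add"
  shows "(\<Sum>c<m + l. f c) = (\<Sum>c<m. f c) + (\<Sum>c<l. f (m + c))"
  by (induction l) (simp_all add: add.assoc)

lemma mult_append_rows:
  fixes B A Z :: "'a :: semiring_0 mat"
  assumes B: "B \<in> carrier_mat n (m + l)" and A: "A \<in> carrier_mat m k" and Z: "Z \<in> carrier_mat l k"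
  shows "B * (A @\<^sub>r Z) = submatrix B UNIV {0..<m} * A + submatrix B UNIV {m..<m + l} * Z"
    (is "_ = ?B1 * A + ?B2 * Z")
proof -
  have dimB: "dim_row B = n" "m \<le> dim_col B" "m + l \<le> dim_col B" using B by auto
  note B1 = submatrix_cols_atLeastLessThan[OF dimB(2), where m = 0, unfolded dimB(1)]
  note B2 = submatrix_cols_atLeastLessThan[OF dimB(3), where m = m, unfolded dimB(1)]
  have AZ: "A @\<^sub>r Z \<in> carrier_mat (m + l) k" using A Z by blast
  show ?thesis
  proof (rule eq_matI)
    fix i j assume "i < dim_row (?B1 * A + ?B2 * Z)" "j < dim_col (?B1 * A + ?B2 * Z)"
    then have i: "i < n" and j: "j < k" using B1(1) B2(1) A Z by auto
    have "(B * (A @\<^sub>r Z)) $$ (i, j) = (\<Sum>c<m + l. B $$ (i, c) * (A @\<^sub>r Z) $$ (c, j))"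
      using index_mult_mat_sum[of i B j "A @\<^sub>r Z"] i j B AZ by simp
    also have "\<dots> = (\<Sum>c<m. B $$ (i, c) * (A @\<^sub>r Z) $$ (c, j))
        + (\<Sum>c<l. B $$ (i, m + c) * (A @\<^sub>r Z) $$ (m + c, j))"
      by (rule sum_lessThan_add_split)
    also have "\<dots> = (\<Sum>c<m. ?B1 $$ (i, c) * A $$ (c, j)) + (\<Sum>c<l. ?B2 $$ (i, c) * Z $$ (c, j))"
      using i j A Z B1(2) B2(2) by (auto simp: append_rows_def intro!: arg_cong2[where f = "(+)"] sum.cong)
    also have "\<dots> = (?B1 * A) $$ (i, j) + (?B2 * Z) $$ (i, j)"
      by (subst (1 2) index_mult_mat_sum) (use i j A Z B1(1) B2(1) in auto)
    also have "\<dots> = (?B1 * A + ?B2 * Z) $$ (i, j)"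
      using i j A Z B1(1) B2(1) by simp
    finally show "(B * (A @\<^sub>r Z)) $$ (i, j) = (?B1 * A + ?B2 * Z) $$ (i, j)" .
  qed (use B1(1) B2(1) A Z B carrier_matD[OF AZ] in auto)
qed

lemma exists_append_rows_mult_vanishing:
  fixes B A :: "'a :: comm_ring_1 mat"
  assumes B: "B \<in> carrier_mat n (m + l)" and A: "A \<in> carrier_mat m k"
    and W: "\<And>j. j < k \<Longrightarrow> W j \<subseteq> {..<n}"
    and inv: "\<And>j. j < k \<Longrightarrow> invertible_mat (submatrix B (W j) {m..<m + l})"
  shows "\<exists>Z \<in> carrier_mat l k. \<forall>j<k. \<forall>i\<in>W j. (B * (A @\<^sub>r Z)) $$ (i, j) = 0"
proof -
  let ?B1 = "submatrix B UNIV {0..<m}" and ?B2 = "submatrix B UNIV {m..<m + l}"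
  have dimB: "dim_row B = n" "m \<le> dim_col B" "m + l \<le> dim_col B" using B by auto
  have B1: "?B1 \<in> carrier_mat n m"
    using submatrix_cols_atLeastLessThan(1)[OF dimB(2), where m = 0] dimB(1) by simp
  have B2: "?B2 \<in> carrier_mat n l"
    using submatrix_cols_atLeastLessThan(1)[OF dimB(3), where m = m] dimB(1) by simp
  have "\<exists>z \<in> carrier_vec l. \<forall>i\<in>W j. (?B2 *\<^sub>v z) $ i = (- col (?B1 * A) j) $ i" if "j < k" for j
  proof (rule exists_mult_mat_vec_eq_on_rows[OF B2 W[OF that]])
    show "invertible_mat (submatrix ?B2 (W j) UNIV)"
      unfolding submatrix_split[of B "W j" "{m..<m + l}", symmetric] using inv[OF that] .
    show "- col (?B1 * A) j \<in> carrier_vec n" using col_dim[of "?B1 * A" j] B1 by simp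
  qed
  then obtain zf where zf: "\<And>j. j < k \<Longrightarrow> zf j \<in> carrier_vec l"
    and zf_eq: "\<And>j i. j < k \<Longrightarrow> i \<in> W j \<Longrightarrow> (?B2 *\<^sub>v zf j) $ i = (- col (?B1 * A) j) $ i"
    by metis
  define Z where "Z = mat l k (\<lambda>(c, j). zf j $ c)"
  have Z: "Z \<in> carrier_mat l k" by (simp add: Z_def)
  have "(B * (A @\<^sub>r Z)) $$ (i, j) = 0" if j: "j < k" and i: "i \<in> W j" for i j
  proof -
    have "i < n" using W[OF j] i by auto
    have "col Z j = zf j" using zf[OF j, THEN carrier_vecD] j by (auto simp: Z_def)
    then have "(?B2 * Z) $$ (i, j) = - (?B1 * A) $$ (i, j)"
      using zf_eq[OF j i] \<open>i < n\<close> j B1 B2 A Z by simp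
    moreover have "(B * (A @\<^sub>r Z)) $$ (i, j) = (?B1 * A) $$ (i, j) + (?B2 * Z) $$ (i, j)"
      unfolding mult_append_rows[OF B A Z] using \<open>i < n\<close> j B1 B2 A Z by simp
    ultimately show ?thesis by simp
  qed
  with Z show ?thesis by blast
qed

lemma inj_on_add_mod:
  fixes c n :: nat
  shows "inj_on (\<lambda>t. (c + t) mod n) {..<n}"
proof (rule inj_onI)
  fix s t assume s: "s \<in> {..<n}" and t: "t \<in> {..<n}" and eq: "(c + s) mod n = (c + t) mod n"
  from eq obtain q1 q2 where "c + s + n * q1 = c + t + n * q2" unfolding nat_mod_eq_iff by blast
  then have "s + n * q1 = t + n * q2" by simp
  then have "s mod n = t mod n" unfolding nat_mod_eq_iff by blast
  then show "s = t" using s t by simp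
qed

lemma card_shifted_residues:
  fixes c n :: nat
  assumes T: "T \<subseteq> {..<n}"
  shows "card {t. t < n \<and> (c + t) mod n \<in> T} = card T"
proof -
  let ?f = "\<lambda>t. (c + t) mod n"
  have "?f ` {..<n} \<subseteq> {..<n}" by (auto intro: mod_less_divisor)
  then have onto: "?f ` {..<n} = {..<n}" by (rule endo_inj_surj[OF finite_lessThan _ inj_on_add_mod])
  have "T \<subseteq> ?f ` {t. t < n \<and> ?f t \<in> T}"
  proof
    fix x assume x: "x \<in> T"
    then have "x \<in> ?f ` {..<n}" unfolding onto using T by blast
    then obtain t where "t < n" "x = ?f t" by blast
    then show "x \<in> ?f ` {t. t < n \<and> ?f t \<in> T}" using x by blast
  qed
  then have img: "?f ` {t. t < n \<and> ?f t \<in> T} = T" by (intro equalityI) auto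
  have "inj_on ?f {t. t < n \<and> ?f t \<in> T}" by (rule inj_on_subset[OF inj_on_add_mod]) blast
  from card_image[OF this] show ?thesis unfolding img by (rule sym)
qed

lemma card_shifted_residues_multiple:
  fixes c n q :: nat
  assumes "T \<subseteq> {..<n}"
  shows "card {j. j < q * n \<and> (c + j) mod n \<in> T} = q * card T"
proof (induction q)
  case 0
  show ?case by simp
next
  case (Suc q)
  let ?P = "\<lambda>j. (c + j) mod n \<in> T"
  let ?low = "{j. j < q * n \<and> ?P j}" and ?top = "(+) (q * n) ` {t. t < n \<and> ?P t}"
  have shift: "(c + (q * n + t)) mod n = (c + t) mod n" for t
  proof -
    have "(c + (q * n + t)) mod n = (c + t + q * n) mod n" by (simp add: ac_simps)
    also have "\<dots> = (c + t) mod n" by (rule mod_mult_self1)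
    finally show ?thesis .
  qed
  have "{j. j < Suc q * n \<and> ?P j} \<subseteq> ?low \<union> ?top"
  proof
    fix j assume j: "j \<in> {j. j < Suc q * n \<and> ?P j}"
    show "j \<in> ?low \<union> ?top"
    proof (cases "j < q * n")
      case True
      then show ?thesis using j by simp
    next
      case False
      then have "j = q * n + (j - q * n)" "j - q * n < n" using j by auto
      moreover have "?P (j - q * n)" using j shift[of "j - q * n"] \<open>j = _\<close> by simp
      ultimately show ?thesis by blast
    qed
  qed
  moreover have "?low \<union> ?top \<subseteq> {j. j < Suc q * n \<and> ?P j}" using shift by auto
  ultimately have split: "{j. j < Suc q * n \<and> ?P j} = ?low \<union> ?top" by (rule antisym)
  have "?low \<inter> ?top = {}" by auto
  moreover have "card ?top = card {t. t < n \<and> ?P t}" by (rule card_image) (simp add: inj_on_def)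
  ultimately have "card {j. j < Suc q * n \<and> ?P j} = q * card T + card {t. t < n \<and> ?P t}"
    unfolding split using Suc.IH by (simp add: card_Un_disjoint)
  then show ?case using card_shifted_residues[OF assms] by simp
qed

text \<open>
  For fixed j the window is a cyclic interval of l rows; for fixed i the residues of the columns
  whose window contains i form a cyclic interval of l residues.
\<close>

definition cyclic_window :: "nat \<Rightarrow> nat \<Rightarrow> nat \<Rightarrow> nat set" where
  "cyclic_window n l j = {i. i < n \<and> (i + j) mod n < l}"

lemma card_cyclic_window:
  assumes "l \<le> n"
  shows "card (cyclic_window n l j) = l"
  using card_shifted_residues[of "{..<l}" n j] assms by (simp add: cyclic_window_def add.commute)

lemma card_cyclic_windows_containing:
  assumes "i < n" "l \<le> n"
  shows "card {j. j < q * n \<and> i \<in> cyclic_window n l j} = q * l"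
  using card_shifted_residues_multiple[of "{..<l}" n q i] assms by (simp add: cyclic_window_def)

lemma sparsity_row_le:
  assumes "F \<in> carrier_mat n k" "i < n" "J \<subseteq> {..<k}" "\<And>j. j \<in> J \<Longrightarrow> F $$ (i, j) = 0"
  shows "sparsity (row F i) \<le> k - card J"
proof -
  have "{j. j < dim_vec (row F i) \<and> row F i $ j \<noteq> 0} \<subseteq> {..<k} - J" using assms by auto
  then have "sparsity (row F i) \<le> card ({..<k} - J)" unfolding sparsity_def by (simp add: card_mono)
  also have "\<dots> = k - card J" using assms(3) by (simp add: card_Diff_subset finite_subset)
  finally show ?thesis .
qed

lemma exists_append_rows_row_sparsity_le:
  fixes A B :: "'a :: comm_ring_1 mat"
  assumes B: "B \<in> carrier_mat n (m + l)" and A: "A \<in> carrier_mat m (q * n)"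
    and "l \<le> n" and inv: "all_square_submatrices_invertible B"
  shows "\<exists>Z \<in> carrier_mat l (q * n). \<forall>i<n. sparsity (row (B * (A @\<^sub>r Z)) i) \<le> q * (n - l)"
proof -
  let ?W = "cyclic_window n l"
  have W: "?W j \<subseteq> {..<n}" for j by (auto simp: cyclic_window_def)
  have "invertible_mat (submatrix B (?W j) {m..<m + l})" for j
  proof (rule all_square_submatrices_invertibleD[OF inv])
    show "?W j \<subseteq> {..<dim_row B}" using B W by simp
    show "{m..<m + l} \<subseteq> {..<dim_col B}" using B by auto
    show "card (?W j) = card {m..<m + l}" using card_cyclic_window[OF \<open>l \<le> n\<close>] by simp
  qed
  then have "\<exists>Z \<in> carrier_mat l (q * n). \<forall>j<q * n. \<forall>i\<in>?W j. (B * (A @\<^sub>r Z)) $$ (i, j) = 0"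
    by (intro exists_append_rows_mult_vanishing[OF B A] W)
  then obtain Z where Z: "Z \<in> carrier_mat l (q * n)"
    and zero: "\<And>j i. j < q * n \<Longrightarrow> i \<in> ?W j \<Longrightarrow> (B * (A @\<^sub>r Z)) $$ (i, j) = 0"
    by blast
  have F: "B * (A @\<^sub>r Z) \<in> carrier_mat n (q * n)" using B A Z by auto
  have "sparsity (row (B * (A @\<^sub>r Z)) i) \<le> q * (n - l)" if i: "i < n" for i
  proof -
    have "sparsity (row (B * (A @\<^sub>r Z)) i) \<le> q * n - card {j. j < q * n \<and> i \<in> ?W j}"
      by (rule sparsity_row_le[OF F i]) (use zero in auto)
    also have "\<dots> = q * (n - l)"
      using card_cyclic_windows_containing[OF i \<open>l \<le> n\<close>] by (simp add: diff_mult_distrib2)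
    finally show ?thesis .
  qed
  with Z show ?thesis by blast
qed

theorem lemma2:
  fixes M K P N :: nat and A B :: "real mat"
  assumes "0 < M" "0 < K" "0 < P" "0 < N"
    and "M \<le> K" "K \<le> P" "P dvd N"
    and "A \<in> carrier_mat M N"
    and "B \<in> carrier_mat P K"
    and "all_square_submatrices_invertible B"
  shows "\<exists>Z \<in> carrier_mat (K - M) N.
           \<forall>i < P. real (sparsity (row (B * (A @\<^sub>r Z)) i))
                    \<le> real N / real P * real (P - K + M)"
proof -
  obtain q where N: "N = q * P" using \<open>P dvd N\<close> by (metis dvdE mult.commute)
  have B: "B \<in> carrier_mat P (M + (K - M))" using \<open>B \<in> carrier_mat P K\<close> \<open>M \<le> K\<close> by simp
  have A: "A \<in> carrier_mat M (q * P)" using \<open>A \<in> carrier_mat M N\<close> N by simp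
  have "K - M \<le> P" using \<open>K \<le> P\<close> by simp
  from exists_append_rows_row_sparsity_le[OF B A this \<open>all_square_submatrices_invertible B\<close>]
  obtain Z where Z: "Z \<in> carrier_mat (K - M) N"
    and sparse: "\<And>i. i < P \<Longrightarrow> sparsity (row (B * (A @\<^sub>r Z)) i) \<le> q * (P - (K - M))"
    unfolding N by blast
  have "real (q * (P - (K - M))) = real N / real P * real (P - K + M)"
    using N \<open>0 < P\<close> \<open>M \<le> K\<close> \<open>K \<le> P\<close> by simp
  with Z sparse show ?thesis by (metis of_nat_le_iff)
qed

end
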